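(* Let $N=\{1,\dots,n\}$ and let $\Psi_{TU}$ be the StatisticalSolution problem with instance space $\mathcal X=2^N$ (coalitions), game class $\mathbb G=\{v:2^N\to\mathbb R_{+}\}$ (all TU cooperative games on $N$), solution space $\mathbb S=\mathbb R^n$ (payoff vectors), and local loss $\lambda(S,v,\vec x)=1$ if $v(S)>\sum_{i\in S}x_i$ (i.e. $S$ blocks $\vec x$) and $\lambda(S,v,\vec x)=0$ otherwise. Then $\mathit{Sd}(\Psi_{TU})\le n$; in particular the solution dimension of TU cooperative games is $O(n)$.
   Context: A StatisticalSolution problem is a tuple $\Psi=(\mathcal X,\mathcal Y,\mathbb G,\mathbb S,\lambda)$ with $\mathbb G\subseteq\mathcal Y^{\mathcal X}$ a class of games, $\mathbb S$ a solution space and $\lambda:\mathcal X\times\mathbb G\times\mathbb S\to\{0,1\}$ a local loss. A set $C\subseteq\mathcal X$ is S-shattered in $\Psi$ if there exists a game $g\in\mathbb G$ such that for every $b:C\to\{0,1\}$ there is $s\in\mathbb S$ (depending on $b$) with $\lambda(x,g,s)=b(x)$ for all $x\in C$. The solution dimension $\mathit{Sd}(\Psi)$ is the largest size of an S-shattered set. *)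

theory Defs
  imports Main "HOL-Library.Extended_Nat"
begin

definition s_shattered ::
  "'g set \<Rightarrow> 's set \<Rightarrow> ('x \<Rightarrow> 'g \<Rightarrow> 's \<Rightarrow> nat) \<Rightarrow> 'x set \<Rightarrow> bool" where
  "s_shattered G S lam C \<longleftrightarrow>
     (\<exists>g\<in>G. \<forall>b::'x \<Rightarrow> nat. (\<forall>x\<in>C. b x \<in> {0,1}) \<longrightarrow>
        (\<exists>s\<in>S. \<forall>x\<in>C. lam x g s = b x))"

definition solution_dim ::
  "'x set \<Rightarrow> 'g set \<Rightarrow> 's set \<Rightarrow> ('x \<Rightarrow> 'g \<Rightarrow> 's \<Rightarrow> nat) \<Rightarrow> enat" where
  "solution_dim X G S lam =
     (SUP C \<in> {C. C \<subseteq> X \<and> s_shattered G S lam C}.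
        (if finite C then enat (card C) else \<infinity>))"

definition tu_players :: "nat \<Rightarrow> nat set" where
  "tu_players n = {1..n}"

definition tu_instances :: "nat \<Rightarrow> nat set set" where
  "tu_instances n = Pow (tu_players n)"

text \<open>Games v : 2^N -> R_+ (values off 2^N fixed to 0).\<close>
definition tu_games :: "nat \<Rightarrow> (nat set \<Rightarrow> real) set" where
  "tu_games n = {v. (\<forall>T. T \<subseteq> tu_players n \<longrightarrow> v T \<ge> 0) \<and>
                    (\<forall>T. \<not> T \<subseteq> tu_players n \<longrightarrow> v T = 0)}"

text \<open>Payoff vectors in R^n, as functions on N (zero outside N).\<close>
definition tu_solutions :: "nat \<Rightarrow> (nat \<Rightarrow> real) set" where
  "tu_solutions n = {x. \<forall>i. i \<notin> tu_players n \<longrightarrow> x i = 0}"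

definition tu_loss :: "nat set \<Rightarrow> (nat set \<Rightarrow> real) \<Rightarrow> (nat \<Rightarrow> real) \<Rightarrow> nat" where
  "tu_loss T v x = (if v T > (\<Sum>i\<in>T. x i) then 1 else 0)"

end

theory Submission
  imports Defs "HOL-Library.Function_Algebras" "HOL-Library.Indicator_Function"
begin

text \<open>If a nonzero combination \<open>\<Sum>S. a S \<cdot> 1\<^sub>S\<close> of the indicator vectors of shattered
  coalitions vanished, then \<open>\<Sum>S. a S \<cdot> x(S) = 0\<close> for every payoff vector \<open>x\<close>. A payoff vector
  blocked exactly by the coalitions with \<open>a S > 0\<close> then forces \<open>\<Sum>S. a S \<cdot> v(S) \<ge> 0\<close>, and one
  blocked exactly by those with \<open>a S < 0\<close> forces \<open>\<Sum>S. a S \<cdot> v(S) \<le> 0\<close>, one of the two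
  strictly. Hence the indicator vectors of a shattered family are linearly independent in
  \<open>\<real>\<^sup>N\<close>, so there are at most \<open>|N|\<close> of them.\<close>

text \<open>Functions into \<open>real\<close> have no \<open>real_vector\<close> instance, so \<open>\<real>\<^sup>A\<close> is obtained by
  interpreting \<open>vector_space\<close> with pointwise scaling; the additive group structure comes
  from \<open>Function_Algebras\<close>.\<close>

interpretation real_fun: vector_space "\<lambda>(c::real) (f::'a \<Rightarrow> real) i. c * f i"
  by unfold_locales (simp_all add: algebra_simps fun_eq_iff)

lemma inj_indicator_real: "inj (indicator :: 'a set \<Rightarrow> 'a \<Rightarrow> real)"
  by (rule injI) (metis indicator_eq_1_iff set_eqI)

lemma sum_apply: "(\<Sum>x\<in>A. f x) i = (\<Sum>x\<in>A. f x i :: 'b::comm_monoid_add)"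
  by (induction A rule: infinite_finite_induct) auto

lemma indicator_eq_sum_singletons:
  "finite S \<Longrightarrow> (indicator S :: 'a \<Rightarrow> real) = (\<Sum>i\<in>S. indicator {i})"
  by (simp add: fun_eq_iff sum_apply indicator_def of_bool_def)

lemma sum_eq_sum_mult_indicator:
  "finite N \<Longrightarrow> S \<subseteq> N \<Longrightarrow> sum x S = (\<Sum>i\<in>N. x i * indicator S i :: 'b::semiring_1)"
  by (simp add: Int_absorb1)

lemma card_le_if_indicators_independent:
  fixes N :: "'a set"
  assumes "finite N" "C \<subseteq> Pow N"
    and "real_fun.independent (indicator ` C :: ('a \<Rightarrow> real) set)"
  shows "card C \<le> card N"
proof -
  let ?E = "(\<lambda>i. indicator {i} :: 'a \<Rightarrow> real) ` N"
  have "(indicator ` C :: ('a \<Rightarrow> real) set) \<subseteq> real_fun.span ?E"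
  proof
    fix w :: "'a \<Rightarrow> real" assume "w \<in> indicator ` C"
    then obtain S where "S \<subseteq> N" "w = indicator S" using assms(2) by auto
    moreover have "(\<Sum>i\<in>S. indicator {i}) \<in> real_fun.span ?E"
      using \<open>S \<subseteq> N\<close> by (intro real_fun.span_sum real_fun.span_base) auto
    ultimately show "w \<in> real_fun.span ?E"
      using indicator_eq_sum_singletons \<open>finite N\<close> finite_subset by metis
  qed
  then have "card (indicator ` C :: ('a \<Rightarrow> real) set) \<le> card ?E"
    using real_fun.independent_span_bound assms(1,3) by blast
  moreover have "card (indicator ` C :: ('a \<Rightarrow> real) set) = card C"
    using card_image inj_on_subset[OF inj_indicator_real subset_UNIV] by blast
  ultimately show ?thesis using card_image_le[OF \<open>finite N\<close>] le_trans by metis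
qed

lemma indicators_dependent_imp_vanishing_combination:
  fixes N :: "'a set"
  assumes "finite N" "C \<subseteq> Pow N"
    and "real_fun.dependent (indicator ` C :: ('a \<Rightarrow> real) set)"
  obtains a :: "'a set \<Rightarrow> real"
  where "\<exists>S\<in>C. a S \<noteq> 0" "\<And>x :: 'a \<Rightarrow> real. (\<Sum>S\<in>C. a S * sum x S) = 0"
proof -
  have "finite C" using assms(1,2) by (meson finite_Pow_iff finite_subset)
  then have "finite (indicator ` C :: ('a \<Rightarrow> real) set)" by simp
  from iffD1[OF real_fun.dependent_finite[OF this] assms(3)]
  obtain u where u: "\<exists>w\<in>indicator ` C. u w \<noteq> 0"
    and "(\<Sum>w\<in>indicator ` C. (\<lambda>i. u w * w i)) = (0 :: 'a \<Rightarrow> real)"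
    by blast
  moreover have "(\<Sum>w\<in>indicator ` C. (\<lambda>i. u w * w i))
      = (\<Sum>S\<in>C. (\<lambda>i. u (indicator S) * indicator S i) :: 'a \<Rightarrow> real)"
    using sum.reindex[OF inj_on_subset[OF inj_indicator_real subset_UNIV]] by (simp add: comp_def)
  ultimately have vanishing_fun: "(\<Sum>S\<in>C. (\<lambda>i. u (indicator S) * indicator S i)) = (0 :: 'a \<Rightarrow> real)"
    by simp
  have vanishing_at: "(\<Sum>S\<in>C. u (indicator S) * indicator S i) = 0" for i
    using fun_cong[OF vanishing_fun, of i] by (simp add: sum_apply)
  have "(\<Sum>S\<in>C. u (indicator S) * sum x S) = 0" for x :: "'a \<Rightarrow> real"
  proof -
    have "(\<Sum>S\<in>C. u (indicator S) * sum x S)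
        = (\<Sum>S\<in>C. \<Sum>i\<in>N. x i * (u (indicator S) * indicator S i))"
    proof (rule sum.cong[OF refl])
      fix S assume "S \<in> C"
      then have "sum x S = (\<Sum>i\<in>N. x i * indicator S i)"
        using assms(1,2) sum_eq_sum_mult_indicator by blast
      then show "u (indicator S) * sum x S = (\<Sum>i\<in>N. x i * (u (indicator S) * indicator S i))"
        by (simp add: sum_distrib_left mult.left_commute)
    qed
    also have "\<dots> = (\<Sum>i\<in>N. x i * (\<Sum>S\<in>C. u (indicator S) * indicator S i))"
      by (subst sum.swap) (simp add: sum_distrib_left)
    finally show ?thesis by (simp add: vanishing_at)
  qed
  with u show thesis by (intro that[of "\<lambda>S. u (indicator S)"]) auto
qed

lemma mult_nonneg_if_sign_agrees:
  fixes c y w :: real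
  assumes "y < w \<longleftrightarrow> 0 < c"
  shows "0 \<le> c * (w - y)" and "0 < c \<Longrightarrow> 0 < c * (w - y)"
  using assms by (auto simp: mult_nonpos_nonpos)

lemma blocking_pattern_weighted_value_nonneg:
  assumes "finite C"
    and blocked: "\<And>S. S \<in> C \<Longrightarrow> tu_loss S v x = of_bool (0 < a S)"
    and vanishing: "(\<Sum>S\<in>C. a S * sum x S) = 0"
  shows "0 \<le> (\<Sum>S\<in>C. a S * v S)"
    and "\<exists>S\<in>C. 0 < a S \<Longrightarrow> 0 < (\<Sum>S\<in>C. a S * v S)"
proof -
  have sign: "sum x S < v S \<longleftrightarrow> 0 < a S" if "S \<in> C" for S
    using blocked[OF that] unfolding tu_loss_def by (cases "0 < a S"; cases "sum x S < v S") auto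
  have eq: "(\<Sum>S\<in>C. a S * v S) = (\<Sum>S\<in>C. a S * (v S - sum x S))"
    using vanishing by (simp add: right_diff_distrib sum_subtractf)
  show "0 \<le> (\<Sum>S\<in>C. a S * v S)"
    unfolding eq by (intro sum_nonneg mult_nonneg_if_sign_agrees(1) sign)
  show "0 < (\<Sum>S\<in>C. a S * v S)" if "\<exists>S\<in>C. 0 < a S"
  proof -
    from that obtain S\<^sub>0 where "S\<^sub>0 \<in> C" "0 < a S\<^sub>0" by blast
    then show ?thesis
      unfolding eq using sign
      by (intro sum_pos2[OF \<open>finite C\<close> \<open>S\<^sub>0 \<in> C\<close>] mult_nonneg_if_sign_agrees) auto
  qed
qed

lemma s_shattered_tu_loss_indicators_independent:
  fixes N :: "nat set"
  assumes "finite N" "C \<subseteq> Pow N" and "s_shattered G X tu_loss C"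
  shows "real_fun.independent (indicator ` C :: (nat \<Rightarrow> real) set)"
proof
  assume "real_fun.dependent (indicator ` C :: (nat \<Rightarrow> real) set)"
  then obtain a :: "nat set \<Rightarrow> real" where nonzero: "\<exists>S\<in>C. a S \<noteq> 0"
    and vanishing: "\<And>x. (\<Sum>S\<in>C. a S * sum x S) = 0"
    using indicators_dependent_imp_vanishing_combination assms(1,2) by blast
  have "finite C" using assms(1,2) by (meson finite_Pow_iff finite_subset)
  obtain v where realise: "\<And>b. \<forall>S\<in>C. b S \<in> {0, 1} \<Longrightarrow> \<exists>x\<in>X. \<forall>S\<in>C. tu_loss S v x = b S"
    using assms(3) unfolding s_shattered_def by blast
  have "\<exists>x\<in>X. \<forall>S\<in>C. tu_loss S v x = of_bool (0 < a S)"
    by (rule realise) auto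
  then obtain x\<^sub>1 where "\<And>S. S \<in> C \<Longrightarrow> tu_loss S v x\<^sub>1 = of_bool (0 < a S)"
    by blast
  note pos = blocking_pattern_weighted_value_nonneg[OF \<open>finite C\<close> this vanishing]
  have "\<exists>x\<in>X. \<forall>S\<in>C. tu_loss S v x = of_bool (0 < - a S)"
    by (rule realise) auto
  then obtain x\<^sub>2 where "\<And>S. S \<in> C \<Longrightarrow> tu_loss S v x\<^sub>2 = of_bool (0 < - a S)"
    by blast
  moreover have "(\<Sum>S\<in>C. - a S * sum x\<^sub>2 S) = 0"
    using vanishing[of x\<^sub>2] by (simp add: sum_negf)
  ultimately have neg: "0 \<le> (\<Sum>S\<in>C. - a S * v S)" "\<exists>S\<in>C. 0 < - a S \<Longrightarrow> 0 < (\<Sum>S\<in>C. - a S * v S)"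
    using blocking_pattern_weighted_value_nonneg[OF \<open>finite C\<close>, of v x\<^sub>2 "\<lambda>S. - a S"] by simp_all
  have negated: "(\<Sum>S\<in>C. - a S * v S) = - (\<Sum>S\<in>C. a S * v S)"
    by (simp add: sum_negf)
  from nonzero obtain S\<^sub>0 where "S\<^sub>0 \<in> C" "a S\<^sub>0 \<noteq> 0" by blast
  then consider "0 < a S\<^sub>0" | "0 < - a S\<^sub>0" by linarith
  then have "0 < (\<Sum>S\<in>C. a S * v S) \<or> 0 < (\<Sum>S\<in>C. - a S * v S)"
    using pos(2) neg(2) \<open>S\<^sub>0 \<in> C\<close> by cases blast+
  with pos(1) neg(1) show False
    unfolding negated by linarith
qed

theorem mainTheorem3:
  fixes n :: nat
  shows "solution_dim (tu_instances n) (tu_games n) (tu_solutions n) tu_loss \<le> enat n"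
  unfolding solution_dim_def
proof (rule SUP_least)
  fix C assume "C \<in> {C. C \<subseteq> tu_instances n \<and> s_shattered (tu_games n) (tu_solutions n) tu_loss C}"
  then have C: "C \<subseteq> Pow {1..n}" and sh: "s_shattered (tu_games n) (tu_solutions n) tu_loss C"
    by (auto simp: tu_instances_def tu_players_def)
  have "card C \<le> card {1..n}"
    using card_le_if_indicators_independent[OF _ C]
      s_shattered_tu_loss_indicators_independent[OF _ C sh] by simp
  moreover have "finite C" using C finite_subset by blast
  ultimately show "(if finite C then enat (card C) else \<infinity>) \<le> enat n"
    by simp
qed

end
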